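(* Let $G$ be a group with a conjugation-closed generating set $X$ and let $g\in\mathrm{Mon}(X)$. Then $\mathrm{Fact}(G,g,\mathbf I)$ is isomorphic to the poset of nonempty chains of the interval $[1,g]$, ordered by inclusion.
   Context: $\mathrm{Mon}(X)$ is the submonoid generated by $X$; $\ell(x)$ is the minimal length of a product of elements of $X$ equal to $x$; $x\le y$ if there is $x'\in\mathrm{Mon}(X)$ with $xx'=y$ and $\ell(x)+\ell(x')=\ell(y)$; $[1,g]=\{x:x\le g\}$ with this order. A chain is a set $\{y_0<y_1<\cdots<y_k\}$ of elements of $[1,g]$. A linear factorization of $g$ is a row vector $[x_L\ x_1\ \cdots\ x_k\ x_R]$ ($k\ge0$) of elements of $\mathrm{Mon}(X)$ with $x_1,\dots,x_k\ne1$ ($x_L,x_R$ may be trivial), $\ell(x_L)+\ell(x_1)+\cdots+\ell(x_k)+\ell(x_R)=\ell(g)$ and $x_Lx_1\cdots x_kx_R=g$. Writing $x_0=x_L$, $x_{k+1}=x_R$, the merge at position $i\in\{0,\dots,k\}$ replaces the consecutive entries $x_i,x_{i+1}$ by the single entry $x_ix_{i+1}$ (giving a linear factorization with one fewer entry). $\mathrm{Fact}(G,g,\mathbf I)$ is the set of linear factorizations of $g$ with $\mathbf x\le\mathbf y$ iff $\mathbf x$ is obtained from $\mathbf y$ by a finite sequence of merges. *)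

theory Defs
  imports "HOL-Algebra.Generated_Groups"
begin

definition lprod :: "('a, 'b) monoid_scheme \<Rightarrow> 'a list \<Rightarrow> 'a" where
  "lprod G xs = foldr (\<lambda>x y. x \<otimes>\<^bsub>G\<^esub> y) xs \<one>\<^bsub>G\<^esub>"

definition Mon :: "('a, 'b) monoid_scheme \<Rightarrow> 'a set \<Rightarrow> 'a set" where
  "Mon G X = {lprod G xs | xs. set xs \<subseteq> X}"

definition len :: "('a, 'b) monoid_scheme \<Rightarrow> 'a set \<Rightarrow> 'a \<Rightarrow> nat" where
  "len G X x = (LEAST n. \<exists>xs. length xs = n \<and> set xs \<subseteq> X \<and> lprod G xs = x)"

definition pre_le :: "('a, 'b) monoid_scheme \<Rightarrow> 'a set \<Rightarrow> 'a \<Rightarrow> 'a \<Rightarrow> bool" where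
  "pre_le G X x y \<longleftrightarrow> x \<in> Mon G X \<and> y \<in> Mon G X \<and>
     (\<exists>x' \<in> Mon G X. x \<otimes>\<^bsub>G\<^esub> x' = y \<and> len G X x + len G X x' = len G X y)"

definition interval :: "('a, 'b) monoid_scheme \<Rightarrow> 'a set \<Rightarrow> 'a \<Rightarrow> 'a set" where
  "interval G X g = {x. pre_le G X x g}"

definition nonempty_chains :: "('a, 'b) monoid_scheme \<Rightarrow> 'a set \<Rightarrow> 'a \<Rightarrow> 'a set set" where
  "nonempty_chains G X g = {C. C \<subseteq> interval G X g \<and> finite C \<and> C \<noteq> {} \<and>
     (\<forall>a\<in>C. \<forall>b\<in>C. pre_le G X a b \<or> pre_le G X b a)}"

text \<open>Linear factorizations [x_L, x_1, ..., x_k, x_R] of g, as lists of length k+2.\<close>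
definition linfact :: "('a, 'b) monoid_scheme \<Rightarrow> 'a set \<Rightarrow> 'a \<Rightarrow> 'a list set" where
  "linfact G X g = {xs. length xs \<ge> 2 \<and> set xs \<subseteq> Mon G X \<and>
     (\<forall>i. 0 < i \<and> i < length xs - 1 \<longrightarrow> xs ! i \<noteq> \<one>\<^bsub>G\<^esub>) \<and>
     (\<Sum>x\<leftarrow>xs. len G X x) = len G X g \<and> lprod G xs = g}"

definition merge_at :: "('a, 'b) monoid_scheme \<Rightarrow> nat \<Rightarrow> 'a list \<Rightarrow> 'a list" where
  "merge_at G i xs = take i xs @ [xs ! i \<otimes>\<^bsub>G\<^esub> xs ! Suc i] @ drop (Suc (Suc i)) xs"

definition merge_step :: "('a, 'b) monoid_scheme \<Rightarrow> 'a set \<Rightarrow> 'a \<Rightarrow> ('a list \<times> 'a list) set" where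
  "merge_step G X g = {(ys, xs). ys \<in> linfact G X g \<and> xs \<in> linfact G X g \<and>
     (\<exists>i. Suc i < length ys \<and> xs = merge_at G i ys)}"

definition fact_le :: "('a, 'b) monoid_scheme \<Rightarrow> 'a set \<Rightarrow> 'a \<Rightarrow> 'a list \<Rightarrow> 'a list \<Rightarrow> bool" where
  "fact_le G X g xs ys \<longleftrightarrow> xs \<in> linfact G X g \<and> ys \<in> linfact G X g \<and>
     (ys, xs) \<in> (merge_step G X g)\<^sup>*"

end

theory Submission
  imports Defs
begin

text \<open>
  Record a linear factorization [x_L, x_1, ..., x_k, x_R] of g by its prefix products
  x_L, x_L x_1, ..., x_L x_1 ... x_k. Word length is additive along the factorization and the
  inner factors are nontrivial, so these prefixes lie in [1,g] and have strictly increasing length: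
  they form a chain with k + 1 elements, and by left cancellation they determine the
  factorization. Conversely, the successive quotients of a chain c_0 < ... < c_k, completed by
  c_k^-1 g, form a linear factorization. Merging two neighbouring entries deletes exactly one
  prefix product, and any inclusion of chains is a sequence of single deletions, so merges
  correspond to inclusion.
\<close>

lemma lprod_Nil [simp]: "lprod G [] = \<one>\<^bsub>G\<^esub>"
  by (simp add: lprod_def)

lemma lprod_Cons [simp]: "lprod G (x # xs) = x \<otimes>\<^bsub>G\<^esub> lprod G xs"
  by (simp add: lprod_def)

subsection \<open>Word length\<close>

definition len_additive :: "('a, 'b) monoid_scheme \<Rightarrow> 'a set \<Rightarrow> 'a list \<Rightarrow> bool" where
  "len_additive G X xs \<longleftrightarrow>
     set xs \<subseteq> Mon G X \<and> len G X (lprod G xs) = (\<Sum>x\<leftarrow>xs. len G X x)"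

locale word_length_monoid = monoid G for G (structure) +
  fixes X :: "'a set"
  assumes gens_closed: "X \<subseteq> carrier G"
begin

lemma lprod_closed: "set xs \<subseteq> carrier G \<Longrightarrow> lprod G xs \<in> carrier G"
  by (induct xs) auto

lemma lprod_append:
  "set xs \<subseteq> carrier G \<Longrightarrow> set ys \<subseteq> carrier G \<Longrightarrow>
    lprod G (xs @ ys) = lprod G xs \<otimes> lprod G ys"
  by (induct xs) (auto simp: m_assoc lprod_closed)

lemma Mon_subset_carrier: "Mon G X \<subseteq> carrier G"
  unfolding Mon_def using gens_closed lprod_closed by blast

lemma one_in_Mon: "\<one> \<in> Mon G X"
  unfolding Mon_def by (rule CollectI, rule exI[of _ "[]"]) simp

lemma Mon_mult_closed:
  assumes "a \<in> Mon G X" "b \<in> Mon G X"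
  shows "a \<otimes> b \<in> Mon G X"
proof -
  obtain as bs where "set as \<subseteq> X" "a = lprod G as" "set bs \<subseteq> X" "b = lprod G bs"
    using assms unfolding Mon_def by blast
  then show ?thesis
    unfolding Mon_def using gens_closed
    by (intro CollectI exI[of _ "as @ bs"]) (auto simp: lprod_append)
qed

lemma lprod_in_Mon: "set xs \<subseteq> Mon G X \<Longrightarrow> lprod G xs \<in> Mon G X"
  by (induct xs) (auto simp: one_in_Mon Mon_mult_closed)

lemma len_witness:
  assumes "x \<in> Mon G X"
  obtains ws where "length ws = len G X x" "set ws \<subseteq> X" "lprod G ws = x"
proof -
  have "\<exists>ws. length ws = len G X x \<and> set ws \<subseteq> X \<and> lprod G ws = x"
    unfolding len_def by (rule LeastI_ex) (use assms in \<open>auto simp: Mon_def\<close>)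
  then show thesis using that by blast
qed

lemma len_le_length: "set ws \<subseteq> X \<Longrightarrow> len G X (lprod G ws) \<le> length ws"
  unfolding len_def by (rule Least_le) blast

lemma len_one [simp]: "len G X \<one> = 0"
  using len_le_length[of "[]"] by simp

lemma len_eq_0_iff: "x \<in> Mon G X \<Longrightarrow> len G X x = 0 \<longleftrightarrow> x = \<one>"
  by (metis len_one len_witness length_0_conv lprod_Nil)

lemma len_mult_le:
  assumes "a \<in> Mon G X" "b \<in> Mon G X"
  shows "len G X (a \<otimes> b) \<le> len G X a + len G X b"
proof -
  obtain wa wb where "length wa = len G X a" "set wa \<subseteq> X" "lprod G wa = a"
    and "length wb = len G X b" "set wb \<subseteq> X" "lprod G wb = b"
    using assms len_witness by metis
  then show ?thesis
    using len_le_length[of "wa @ wb"] gens_closed by (auto simp: lprod_append)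
qed

lemma len_lprod_le:
  "set xs \<subseteq> Mon G X \<Longrightarrow> len G X (lprod G xs) \<le> (\<Sum>x\<leftarrow>xs. len G X x)"
proof (induct xs)
  case (Cons x xs)
  then show ?case
    using len_mult_le[of x "lprod G xs"] lprod_in_Mon[of xs] by auto
qed simp

lemma len_additive_infix:
  assumes "len_additive G X (as @ bs @ cs)"
  shows "len_additive G X bs"
proof -
  let ?\<Sigma> = "\<lambda>ys. \<Sum>y\<leftarrow>ys. len G X y"
  have M: "set as \<subseteq> Mon G X" "set bs \<subseteq> Mon G X" "set cs \<subseteq> Mon G X"
    using assms unfolding len_additive_def by auto
  then have C: "set as \<subseteq> carrier G" "set bs \<subseteq> carrier G" "set cs \<subseteq> carrier G"
    using Mon_subset_carrier by auto
  have "lprod G (as @ bs @ cs) = lprod G [lprod G as, lprod G bs, lprod G cs]"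
    using C by (simp add: lprod_append lprod_closed)
  then have "?\<Sigma> (as @ bs @ cs) \<le>
      len G X (lprod G as) + len G X (lprod G bs) + len G X (lprod G cs)"
    using assms len_lprod_le[of "[lprod G as, lprod G bs, lprod G cs]"] M lprod_in_Mon
    unfolding len_additive_def by auto
  moreover have "len G X (lprod G as) \<le> ?\<Sigma> as" "len G X (lprod G bs) \<le> ?\<Sigma> bs"
    "len G X (lprod G cs) \<le> ?\<Sigma> cs"
    using M len_lprod_le by auto
  ultimately show ?thesis
    using M unfolding len_additive_def by simp
qed

end

subsection \<open>Prefix products\<close>

definition prefix_prod :: "('a, 'b) monoid_scheme \<Rightarrow> 'a list \<Rightarrow> nat \<Rightarrow> 'a" where
  "prefix_prod G xs j = lprod G (take j xs)"

text \<open>For a linear factorization [x_L, x_1, ..., x_k, x_R] the prefix chain is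
  {x_L, x_L x_1, ..., x_L x_1 ... x_k}; the full product g is not part of it.\<close>

definition prefix_chain :: "('a, 'b) monoid_scheme \<Rightarrow> 'a list \<Rightarrow> 'a set" where
  "prefix_chain G xs = prefix_prod G xs ` {1..length xs - 1}"

context word_length_monoid
begin

lemma linfactD:
  assumes "xs \<in> linfact G X g"
  shows "2 \<le> length xs" "set xs \<subseteq> Mon G X" "set xs \<subseteq> carrier G"
    "\<And>i. 0 < i \<Longrightarrow> i < length xs - 1 \<Longrightarrow> xs ! i \<noteq> \<one>"
    "(\<Sum>x\<leftarrow>xs. len G X x) = len G X g" "lprod G xs = g" "len_additive G X xs"
  using assms Mon_subset_carrier unfolding linfact_def len_additive_def by auto

lemma prefix_prod_Suc:
  assumes "j < length xs" "set xs \<subseteq> carrier G"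
  shows "prefix_prod G xs (Suc j) = prefix_prod G xs j \<otimes> xs ! j"
proof -
  have "set (take j xs) \<subseteq> carrier G" "xs ! j \<in> carrier G"
    using assms by (auto dest: in_set_takeD)
  then show ?thesis
    using assms(1) by (simp add: prefix_prod_def take_Suc_conv_app_nth lprod_append)
qed

lemma prefix_prod_in_Mon: "set xs \<subseteq> Mon G X \<Longrightarrow> prefix_prod G xs j \<in> Mon G X"
  unfolding prefix_prod_def by (meson lprod_in_Mon set_take_subset order_trans)

lemma len_prefix_prod:
  "len_additive G X xs \<Longrightarrow> len G X (prefix_prod G xs j) = (\<Sum>x\<leftarrow>take j xs. len G X x)"
  using len_additive_infix[of "[]" "take j xs" "drop j xs"]
  unfolding len_additive_def prefix_prod_def by simp

lemma pre_le_prefix_prod: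
  assumes xs: "len_additive G X xs" and "j \<le> j'"
  shows "pre_le G X (prefix_prod G xs j) (prefix_prod G xs j')"
proof -
  define ws where "ws = take (j' - j) (drop j xs)"
  have take_j': "take j' xs = take j xs @ ws"
    using \<open>j \<le> j'\<close> take_add[of j "j' - j" xs] unfolding ws_def by simp
  have ws: "len_additive G X ws"
    using len_additive_infix[of "take j xs" ws "drop j' xs"] xs take_j'
    by (metis append.assoc append_take_drop_id)
  have M: "set xs \<subseteq> Mon G X" "set ws \<subseteq> Mon G X"
    using xs ws unfolding len_additive_def by auto
  then have "set (take j xs) \<subseteq> carrier G" "set ws \<subseteq> carrier G"
    using Mon_subset_carrier by (auto dest: in_set_takeD)
  then have "prefix_prod G xs j \<otimes> lprod G ws = prefix_prod G xs j'"
    unfolding prefix_prod_def take_j' by (simp add: lprod_append)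
  moreover have "len G X (prefix_prod G xs j) + len G X (lprod G ws) = len G X (prefix_prod G xs j')"
    using len_prefix_prod[OF xs] ws take_j' unfolding len_additive_def by simp
  ultimately show ?thesis
    unfolding pre_le_def using M prefix_prod_in_Mon lprod_in_Mon by blast
qed

lemma prefix_prod_length: "xs \<in> linfact G X g \<Longrightarrow> prefix_prod G xs (length xs) = g"
  unfolding prefix_prod_def using linfactD(6) by simp

lemma strict_mono_on_len_prefix_prod:
  assumes xs: "xs \<in> linfact G X g"
  shows "strict_mono_on {1..length xs - 1} (\<lambda>j. len G X (prefix_prod G xs j))"
proof (rule strict_mono_onI)
  fix j j' assume j: "j \<in> {1..length xs - 1}" "j' \<in> {1..length xs - 1}" "j < j'"
  have "xs ! j \<in> Mon G X" "xs ! j \<noteq> \<one>"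
    using linfactD(2,4)[OF xs] j by auto
  then have "0 < len G X (xs ! j)"
    using len_eq_0_iff by blast
  moreover have "take j' xs = take j xs @ [xs ! j] @ take (j' - Suc j) (drop (Suc j) xs)"
    using j take_add[of "Suc j" "j' - Suc j" xs] by (simp add: take_Suc_conv_app_nth)
  ultimately show "len G X (prefix_prod G xs j) < len G X (prefix_prod G xs j')"
    using len_prefix_prod[OF linfactD(7)[OF xs]] by simp
qed

lemma inj_on_prefix_prod:
  assumes "xs \<in> linfact G X g"
  shows "inj_on (prefix_prod G xs) {1..length xs - 1}"
proof -
  have "inj_on (len G X \<circ> prefix_prod G xs) {1..length xs - 1}"
    using strict_mono_on_imp_inj_on[OF strict_mono_on_len_prefix_prod[OF assms]] by (simp add: comp_def)
  then show ?thesis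
    by (rule inj_on_imageI2)
qed

lemma inj_on_len_prefix_chain:
  assumes "xs \<in> linfact G X g"
  shows "inj_on (len G X) (prefix_chain G xs)"
proof -
  have "inj_on (len G X \<circ> prefix_prod G xs) {1..length xs - 1}"
    using strict_mono_on_imp_inj_on[OF strict_mono_on_len_prefix_prod[OF assms]] by (simp add: comp_def)
  then show ?thesis
    unfolding prefix_chain_def by (rule inj_on_imageI)
qed

lemma card_prefix_chain: "xs \<in> linfact G X g \<Longrightarrow> card (prefix_chain G xs) = length xs - 1"
  unfolding prefix_chain_def using inj_on_prefix_prod by (simp add: card_image)

lemma sorted_list_of_len_prefix_chain:
  assumes xs: "xs \<in> linfact G X g"
  shows "sorted_list_of_set (len G X ` prefix_chain G xs) =
    map (\<lambda>j. len G X (prefix_prod G xs j)) [1..<length xs]"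
    (is "_ = ?lens")
proof -
  have "{1..<length xs} = {1..length xs - 1}"
    using linfactD(1)[OF xs] by auto
  then have "set ?lens = len G X ` prefix_chain G xs"
    unfolding prefix_chain_def by (simp add: image_image)
  moreover have "sorted_wrt (<) ?lens"
    unfolding sorted_wrt_map
    by (rule sorted_wrt_mono_rel[OF _ sorted_wrt_upt])
      (use strict_mono_onD[OF strict_mono_on_len_prefix_prod[OF xs]] in auto)
  ultimately show ?thesis
    by (metis distinct_card sorted_list_of_set_unique finite_imageI finite_set strict_sorted_iff)
qed

lemma prefix_chain_in_nonempty_chains:
  assumes xs: "xs \<in> linfact G X g"
  shows "prefix_chain G xs \<in> nonempty_chains G X g"
proof -
  note pre_le = pre_le_prefix_prod[OF linfactD(7)[OF xs]]
  have "prefix_chain G xs \<subseteq> interval G X g"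
    unfolding prefix_chain_def interval_def
    using pre_le[of _ "length xs"] prefix_prod_length[OF xs] by auto
  moreover have "prefix_chain G xs \<noteq> {}"
    unfolding prefix_chain_def using linfactD(1)[OF xs] by auto
  moreover have "pre_le G X a b \<or> pre_le G X b a"
    if "a \<in> prefix_chain G xs" "b \<in> prefix_chain G xs" for a b
    using that pre_le nat_le_linear unfolding prefix_chain_def by blast
  ultimately show ?thesis
    unfolding nonempty_chains_def prefix_chain_def by auto
qed

lemma prefix_prod_eq_if_prefix_chain_eq:
  assumes xs: "xs \<in> linfact G X g" and ys: "ys \<in> linfact G X g"
    and eq: "prefix_chain G xs = prefix_chain G ys"
  shows "length ys = length xs"
    and "\<And>j. j \<le> length xs \<Longrightarrow> prefix_prod G xs j = prefix_prod G ys j"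
proof -
  define n where "n = length xs"
  have n: "length ys = n"
    using card_prefix_chain[OF xs] card_prefix_chain[OF ys] eq linfactD(1)[OF xs] linfactD(1)[OF ys]
    unfolding n_def by auto
  then show "length ys = length xs"
    unfolding n_def .
  have lens: "map (\<lambda>j. len G X (prefix_prod G xs j)) [1..<n] =
      map (\<lambda>j. len G X (prefix_prod G ys j)) [1..<n]"
    using sorted_list_of_len_prefix_chain[OF xs] sorted_list_of_len_prefix_chain[OF ys] eq n
    unfolding n_def by simp
  show "prefix_prod G xs j = prefix_prod G ys j" if j: "j \<le> length xs" for j
  proof -
    consider "j = 0" | "j = n" | "j \<in> {1..n - 1}"
      using j unfolding n_def by fastforce
    then show ?thesis
    proof cases
      case 3
      then have "len G X (prefix_prod G xs j) = len G X (prefix_prod G ys j)"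
        using arg_cong[OF lens, of "\<lambda>l. l ! (j - 1)"] by auto
      moreover have "prefix_prod G xs j \<in> prefix_chain G xs" "prefix_prod G ys j \<in> prefix_chain G xs"
        using 3 eq n unfolding prefix_chain_def n_def by auto
      ultimately show ?thesis
        using inj_on_len_prefix_chain[OF xs] by (auto dest: inj_onD)
    qed (use prefix_prod_length[OF xs] prefix_prod_length[OF ys] n n_def
        in \<open>auto simp: prefix_prod_def\<close>)
  qed
qed

end

subsection \<open>Merges\<close>

lemma take_nth_nth_drop:
  "Suc i < length xs \<Longrightarrow> xs = take i xs @ [xs ! i, xs ! Suc i] @ drop (Suc (Suc i)) xs"
  by (metis Cons_nth_drop_Suc Suc_lessD append_Cons append_Nil append_take_drop_id)

lemma length_merge_at: "Suc i < length xs \<Longrightarrow> length (merge_at G i xs) = length xs - 1"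
  by (simp add: merge_at_def)

lemma nth_merge_at:
  assumes "Suc i < length xs" "p < length xs - 1"
  shows "merge_at G i xs ! p =
    (if p < i then xs ! p else if p = i then xs ! i \<otimes>\<^bsub>G\<^esub> xs ! Suc i else xs ! Suc p)"
  using assms by (auto simp: merge_at_def nth_append min_def)

context word_length_monoid
begin

lemma prefix_prod_merge:
  assumes "set T \<subseteq> carrier G" "a \<in> carrier G" "b \<in> carrier G" "set D \<subseteq> carrier G"
  shows "prefix_prod G (T @ [a \<otimes> b] @ D) j =
    prefix_prod G (T @ [a, b] @ D) (if j \<le> length T then j else Suc j)"
proof (cases "j \<le> length T")
  case False
  then obtain r where j: "j = Suc (length T + r)"
    using less_imp_Suc_add by fastforce
  have "set (take r D) \<subseteq> carrier G"
    using assms(4) by (auto dest: in_set_takeD)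
  moreover have "take j (T @ [a \<otimes> b] @ D) = T @ [a \<otimes> b] @ take r D"
    "take (Suc j) (T @ [a, b] @ D) = T @ [a, b] @ take r D"
    using j by simp_all
  ultimately show ?thesis
    using assms False by (simp add: prefix_prod_def lprod_append m_assoc lprod_closed)
qed (simp add: prefix_prod_def)

lemma prefix_prod_merge_at:
  assumes "set xs \<subseteq> carrier G" "Suc i < length xs"
  shows "prefix_prod G (merge_at G i xs) j = prefix_prod G xs (if j \<le> i then j else Suc j)"
proof -
  have C: "set (take i xs) \<subseteq> carrier G" "xs ! i \<in> carrier G" "xs ! Suc i \<in> carrier G"
    "set (drop (Suc (Suc i)) xs) \<subseteq> carrier G"
    using assms by (auto dest: in_set_takeD in_set_dropD)
  show ?thesis
    using prefix_prod_merge[OF C, of j] take_nth_nth_drop[OF assms(2)] assms(2)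
    by (simp add: merge_at_def)
qed

lemma len_mult_nth_Suc:
  assumes xs: "len_additive G X xs" and i: "Suc i < length xs"
  shows "len G X (xs ! i \<otimes> xs ! Suc i) = len G X (xs ! i) + len G X (xs ! Suc i)"
proof -
  have "len_additive G X (take i xs @ [xs ! i, xs ! Suc i] @ drop (Suc (Suc i)) xs)"
    using xs by (simp only: take_nth_nth_drop[OF i, symmetric])
  then have "len_additive G X [xs ! i, xs ! Suc i]"
    by (rule len_additive_infix)
  moreover have "xs ! Suc i \<in> carrier G"
    using xs i nth_mem Mon_subset_carrier unfolding len_additive_def by blast
  ultimately show ?thesis
    unfolding len_additive_def by simp
qed

lemma nth_merge_at_ne_one:
  assumes xs: "xs \<in> linfact G X g" and i: "Suc i < length xs"
    and p: "0 < p" "Suc p < length xs - 1"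
  shows "merge_at G i xs ! p \<noteq> \<one>"
proof (cases "p = i")
  case True
  have "xs ! i \<in> Mon G X" "xs ! i \<noteq> \<one>"
    using linfactD(2,4)[OF xs] i p True by auto
  then have "len G X (xs ! i \<otimes> xs ! Suc i) \<noteq> 0"
    using len_mult_nth_Suc[OF linfactD(7)[OF xs] i] len_eq_0_iff by simp
  then show ?thesis
    using True p by (auto simp: nth_merge_at[OF i])
next
  case False
  then show ?thesis
    using p linfactD(4)[OF xs, of p] linfactD(4)[OF xs, of "Suc p"] by (auto simp: nth_merge_at[OF i])
qed

lemma merge_at_in_linfact:
  assumes xs: "xs \<in> linfact G X g" and i: "Suc i < length xs" and long: "3 \<le> length xs"
  shows "merge_at G i xs \<in> linfact G X g"
proof -
  define T D where "T = take i xs" and "D = drop (Suc (Suc i)) xs"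
  define a b where "a = xs ! i" and "b = xs ! Suc i"
  have xs_eq: "xs = T @ [a, b] @ D" and mg: "merge_at G i xs = T @ [a \<otimes> b] @ D"
    using take_nth_nth_drop[OF i] unfolding T_def D_def a_def b_def merge_at_def by simp_all
  have M: "set T \<subseteq> Mon G X" "a \<in> Mon G X" "b \<in> Mon G X" "set D \<subseteq> Mon G X"
    using linfactD(2)[OF xs] by (subst (asm) xs_eq, simp)+
  then have C: "set T \<subseteq> carrier G" "a \<in> carrier G" "b \<in> carrier G" "set D \<subseteq> carrier G"
    using Mon_subset_carrier by auto
  have "merge_at G i xs ! p \<noteq> \<one>" if "0 < p" "p < length (merge_at G i xs) - 1" for p
    using nth_merge_at_ne_one[OF xs i] that by (simp add: length_merge_at[OF i])
  moreover have "(\<Sum>x\<leftarrow>merge_at G i xs. len G X x) = len G X g"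
    using linfactD(5)[OF xs] len_mult_nth_Suc[OF linfactD(7)[OF xs] i]
    unfolding mg a_def[symmetric] b_def[symmetric] by (subst (asm) xs_eq) simp
  moreover have "lprod G (merge_at G i xs) = g"
    using linfactD(6)[OF xs] C unfolding mg
    by (subst (asm) xs_eq) (simp add: lprod_append m_assoc lprod_closed)
  moreover have "2 \<le> length (merge_at G i xs)"
    using long by (simp add: length_merge_at[OF i])
  moreover have "set (merge_at G i xs) \<subseteq> Mon G X"
    using M Mon_mult_closed unfolding mg by auto
  ultimately show ?thesis
    unfolding linfact_def by blast
qed

lemma prefix_chain_merge_at:
  assumes xs: "xs \<in> linfact G X g" and i: "Suc i < length xs"
  shows "prefix_chain G (merge_at G i xs) = prefix_chain G xs - {prefix_prod G xs (Suc i)}"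
proof -
  let ?n = "length xs"
  let ?skip = "\<lambda>j. if j \<le> i then j else Suc j"
  have "prefix_chain G (merge_at G i xs) = prefix_prod G xs ` (?skip ` {1..?n - 2})"
    unfolding prefix_chain_def length_merge_at[OF i] image_image
    using prefix_prod_merge_at[OF linfactD(3)[OF xs] i] by (simp add: numeral_2_eq_2)
  also have "?skip ` {1..?n - 2} = {1..?n - 1} - {Suc i}"
  proof
    show "{1..?n - 1} - {Suc i} \<subseteq> ?skip ` {1..?n - 2}"
    proof
      fix k assume k: "k \<in> {1..?n - 1} - {Suc i}"
      show "k \<in> ?skip ` {1..?n - 2}"
      proof (cases "k \<le> i")
        case True
        then show ?thesis
          using k i by (intro image_eqI[where x = k]) auto
      next
        case False
        then show ?thesis
          using k by (intro image_eqI[where x = "k - 1"]) auto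
      qed
    qed
  qed (use i in auto)
  also have "prefix_prod G xs ` ({1..?n - 1} - {Suc i}) = prefix_chain G xs - {prefix_prod G xs (Suc i)}"
    unfolding prefix_chain_def using inj_on_prefix_prod[OF xs] i
    by (subst inj_on_image_set_diff) auto
  finally show ?thesis .
qed

lemma merge_step_deleting:
  assumes ys: "ys \<in> linfact G X g" and y: "y \<in> prefix_chain G ys"
    and x: "x \<in> prefix_chain G ys" "x \<noteq> y"
  shows "\<exists>zs. (ys, zs) \<in> merge_step G X g \<and> prefix_chain G zs = prefix_chain G ys - {y}"
proof -
  obtain j j' where j: "j \<in> {1..length ys - 1}" "y = prefix_prod G ys j"
    and j': "j' \<in> {1..length ys - 1}" "x = prefix_prod G ys j'"
    using x(1) y unfolding prefix_chain_def by blast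
  then have "j' \<noteq> j"
    using x(2) by blast
  then have long: "3 \<le> length ys"
    using j(1) j'(1) by auto
  have i: "Suc (j - 1) < length ys" "Suc (j - 1) = j"
    using j(1) by auto
  show ?thesis
  proof (intro exI conjI)
    show "(ys, merge_at G (j - 1) ys) \<in> merge_step G X g"
      unfolding merge_step_def using ys i(1) merge_at_in_linfact[OF ys i(1) long] by blast
    show "prefix_chain G (merge_at G (j - 1) ys) = prefix_chain G ys - {y}"
      using prefix_chain_merge_at[OF ys i(1)] i(2) j(2) by simp
  qed
qed

lemma prefix_chain_subset_if_merge_steps:
  "(ys, xs) \<in> (merge_step G X g)\<^sup>* \<Longrightarrow> prefix_chain G xs \<subseteq> prefix_chain G ys"
proof (induction rule: rtrancl_induct)
  case (step zs ws)
  then obtain i where "zs \<in> linfact G X g" "Suc i < length zs" "ws = merge_at G i zs"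
    unfolding merge_step_def by blast
  then show ?case
    using step.IH prefix_chain_merge_at by blast
qed simp

subsection \<open>Chains of the interval [1,g]\<close>

lemma pre_le_refl: "x \<in> Mon G X \<Longrightarrow> pre_le G X x x"
  unfolding pre_le_def using one_in_Mon Mon_subset_carrier by force

lemma pre_le_eq_if_len_le:
  assumes "pre_le G X m c" "len G X c \<le> len G X m"
  shows "c = m"
proof -
  obtain u where u: "u \<in> Mon G X" "m \<otimes> u = c" "len G X m + len G X u = len G X c"
    using assms(1) unfolding pre_le_def by blast
  have "len G X u = 0"
    using u(3) assms(2) by linarith
  then have "u = \<one>"
    using len_eq_0_iff u(1) by blast
  moreover have "m \<in> carrier G"
    using assms(1) Mon_subset_carrier unfolding pre_le_def by blast
  ultimately show ?thesis
    using u(2) by simp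
qed

lemma prefix_chain_split_last:
  assumes "set xs \<subseteq> carrier G" "2 \<le> length xs" "u \<in> carrier G"
  shows "prefix_chain G (take (length xs - 1) xs @ [u, v]) =
    insert (prefix_prod G xs (length xs - 1) \<otimes> u) (prefix_chain G xs)"
proof -
  define n where "n = length xs"
  define ys where "ys = take (n - 1) xs @ [u, v]"
  have "prefix_prod G ys j = prefix_prod G xs j" if "j \<le> n - 1" for j
    using that unfolding prefix_prod_def ys_def n_def by simp
  then have "prefix_prod G ys ` {1..n - 1} = prefix_chain G xs"
    unfolding prefix_chain_def n_def by (auto intro: image_cong)
  moreover have "set (take (n - 1) xs) \<subseteq> carrier G"
    using assms(1) by (auto dest: in_set_takeD)
  then have "prefix_prod G ys n = prefix_prod G xs (n - 1) \<otimes> u"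
    using assms(2,3) unfolding prefix_prod_def ys_def n_def by (simp add: lprod_append)
  moreover have "{1..length ys - 1} = insert n {1..n - 1}"
    using assms(2) unfolding ys_def n_def by auto
  ultimately show ?thesis
    unfolding n_def[symmetric] ys_def[symmetric] prefix_chain_def[of G ys] by simp
qed

lemma linfact_split_last:
  assumes xs: "xs \<in> linfact G X g"
    and below: "pre_le G X (prefix_prod G xs (length xs - 1)) m"
    and new: "m \<noteq> prefix_prod G xs (length xs - 1)"
    and above: "pre_le G X m g"
  shows "\<exists>ys\<in>linfact G X g. prefix_chain G ys = insert m (prefix_chain G xs)"
proof -
  define n where "n = length xs"
  define T where "T = take (n - 1) xs"
  have n: "2 \<le> n" "length T = n - 1"
    using linfactD(1)[OF xs] unfolding n_def T_def by auto
  have TM: "set T \<subseteq> Mon G X"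
    using linfactD(2)[OF xs] unfolding T_def by (auto dest: in_set_takeD)
  have len_T: "len G X (lprod G T) = (\<Sum>x\<leftarrow>T. len G X x)"
    using len_prefix_prod[OF linfactD(7)[OF xs]] unfolding prefix_prod_def T_def by simp
  obtain u where u: "u \<in> Mon G X" "lprod G T \<otimes> u = m"
    "len G X (lprod G T) + len G X u = len G X m"
    using below unfolding pre_le_def prefix_prod_def T_def n_def by blast
  obtain v where v: "v \<in> Mon G X" "m \<otimes> v = g" "len G X m + len G X v = len G X g"
    using above unfolding pre_le_def by blast
  have C: "set T \<subseteq> carrier G" "u \<in> carrier G" "v \<in> carrier G" "lprod G T \<in> carrier G"
    using TM u(1) v(1) lprod_in_Mon Mon_subset_carrier by auto
  define ys where "ys = T @ [u, v]"
  have "u \<noteq> \<one>"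
    using u(2) new C unfolding prefix_prod_def T_def n_def by auto
  then have "ys ! p \<noteq> \<one>" if "0 < p" "p < length ys - 1" for p
    using that linfactD(4)[OF xs, of p] n unfolding ys_def T_def n_def
    by (cases "p < n - 1") (auto simp: nth_append n_def)
  then have "ys \<in> linfact G X g"
    unfolding linfact_def ys_def
    using TM u v C len_T by (auto simp: lprod_append m_assoc[symmetric])
  moreover have "prefix_chain G ys = insert m (prefix_chain G xs)"
    using prefix_chain_split_last[OF linfactD(3)[OF xs] linfactD(1)[OF xs] C(2), of v] u(2)
    unfolding ys_def T_def n_def prefix_prod_def by simp
  ultimately show ?thesis
    by blast
qed

lemma prefix_chain_singleton:
  assumes "m \<in> interval G X g"
  shows "\<exists>xs\<in>linfact G X g. prefix_chain G xs = {m}"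
proof -
  obtain v where v: "v \<in> Mon G X" "m \<otimes> v = g" "len G X m + len G X v = len G X g"
    and m: "m \<in> Mon G X"
    using assms unfolding interval_def pre_le_def by blast
  then have "[m, v] \<in> linfact G X g"
    unfolding linfact_def using Mon_subset_carrier by auto
  moreover have "prefix_chain G [m, v] = {m}"
    unfolding prefix_chain_def prefix_prod_def using m Mon_subset_carrier by auto
  ultimately show ?thesis
    by blast
qed

lemma pre_le_max_len:
  assumes C: "C \<in> nonempty_chains G X g"
    and m: "m \<in> C" "\<And>c. c \<in> C \<Longrightarrow> len G X c \<le> len G X m" and c: "c \<in> C"
  shows "pre_le G X c m"
proof -
  have "pre_le G X c m \<or> pre_le G X m c"
    using C m(1) c unfolding nonempty_chains_def by blast
  moreover have "m \<in> Mon G X"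
    using C m(1) unfolding nonempty_chains_def interval_def pre_le_def by blast
  ultimately show ?thesis
    using pre_le_eq_if_len_le[of m c] m(2)[OF c] pre_le_refl by blast
qed

lemma prefix_chain_surj:
  "C \<in> nonempty_chains G X g \<Longrightarrow> \<exists>xs\<in>linfact G X g. prefix_chain G xs = C"
proof (induction "card C" arbitrary: C rule: less_induct)
  case less
  have C: "C \<subseteq> interval G X g" "finite C" "C \<noteq> {}"
    using less.prems unfolding nonempty_chains_def by auto
  obtain m where m: "m \<in> C" "len G X m = Max (len G X ` C)"
    using Max_in[of "len G X ` C"] C(2,3) by fastforce
  have "len G X c \<le> len G X m" if "c \<in> C" for c
    using m(2) C(2) that by simp
  then have max: "pre_le G X c m" if "c \<in> C" for c
    using pre_le_max_len[OF less.prems m(1) _ that] by blast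
  have above: "pre_le G X m g"
    using m(1) C(1) unfolding interval_def by blast
  show ?case
  proof (cases "C = {m}")
    case True
    then show ?thesis
      using prefix_chain_singleton C(1) m(1) by blast
  next
    case False
    then have "C - {m} \<in> nonempty_chains G X g"
      using less.prems m(1) unfolding nonempty_chains_def by auto
    moreover have "card (C - {m}) < card C"
      using C(2) m(1) by (rule card_Diff1_less)
    ultimately obtain xs where xs: "xs \<in> linfact G X g" "prefix_chain G xs = C - {m}"
      using less.hyps by blast
    define q where "q = prefix_prod G xs (length xs - 1)"
    have "q \<in> C - {m}"
      using xs linfactD(1)[OF xs(1)] unfolding prefix_chain_def q_def by auto
    then obtain ys where "ys \<in> linfact G X g" "prefix_chain G ys = insert m (C - {m})"
      using linfact_split_last[OF xs(1) _ _ above] max xs(2) unfolding q_def by blast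
    then show ?thesis
      using insert_Diff[OF m(1)] by auto
  qed
qed

end

locale word_length_group = word_length_monoid + group G
begin

lemma eq_if_prefix_prod_eq:
  assumes xs: "set xs \<subseteq> carrier G" and ys: "set ys \<subseteq> carrier G"
    and n: "length xs = length ys"
    and eq: "\<And>j. j \<le> length xs \<Longrightarrow> prefix_prod G xs j = prefix_prod G ys j"
  shows "xs = ys"
proof (rule nth_equalityI)
  fix j assume j: "j < length xs"
  have "prefix_prod G xs j \<otimes> xs ! j = prefix_prod G xs j \<otimes> ys ! j"
    using prefix_prod_Suc[OF j xs] prefix_prod_Suc[of j ys, OF _ ys] eq[of j] eq[of "Suc j"] j n by simp
  moreover have "prefix_prod G xs j \<in> carrier G"
    unfolding prefix_prod_def using xs by (meson lprod_closed set_take_subset order_trans)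
  moreover have "xs ! j \<in> carrier G" "ys ! j \<in> carrier G"
    using xs ys j n by auto
  ultimately show "xs ! j = ys ! j"
    by simp
qed (rule n)

lemma inj_on_prefix_chain: "inj_on (prefix_chain G) (linfact G X g)"
proof (rule inj_onI)
  fix xs ys
  assume xs: "xs \<in> linfact G X g" and ys: "ys \<in> linfact G X g"
    and eq: "prefix_chain G xs = prefix_chain G ys"
  show "xs = ys"
    by (rule eq_if_prefix_prod_eq[OF linfactD(3)[OF xs] linfactD(3)[OF ys]])
      (use prefix_prod_eq_if_prefix_chain_eq[OF xs ys eq] in auto)
qed

lemma merge_steps_if_prefix_chain_subset:
  "xs \<in> linfact G X g \<Longrightarrow> ys \<in> linfact G X g \<Longrightarrow>
    prefix_chain G xs \<subseteq> prefix_chain G ys \<Longrightarrow> (ys, xs) \<in> (merge_step G X g)\<^sup>*"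
proof (induction "card (prefix_chain G ys - prefix_chain G xs)" arbitrary: ys rule: less_induct)
  case less
  note xs = less.prems(1) and ys = less.prems(2) and sub = less.prems(3)
  show ?case
  proof (cases "prefix_chain G ys = prefix_chain G xs")
    case True
    then show ?thesis
      using inj_onD[OF inj_on_prefix_chain True ys xs] by simp
  next
    case False
    then obtain y where y: "y \<in> prefix_chain G ys" "y \<notin> prefix_chain G xs"
      using sub by blast
    obtain x where "x \<in> prefix_chain G xs"
      using prefix_chain_in_nonempty_chains[OF xs] unfolding nonempty_chains_def by auto
    then obtain zs where step: "(ys, zs) \<in> merge_step G X g"
      and chain_zs: "prefix_chain G zs = prefix_chain G ys - {y}"
      using merge_step_deleting[OF ys y(1), of x] sub y(2) by blast
    have zs: "zs \<in> linfact G X g"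
      using step unfolding merge_step_def by blast
    have "(zs, xs) \<in> (merge_step G X g)\<^sup>*"
    proof (rule less.hyps[OF _ xs zs])
      show "prefix_chain G xs \<subseteq> prefix_chain G zs"
        using sub y(2) chain_zs by blast
      have "finite (prefix_chain G ys - prefix_chain G xs)"
        unfolding prefix_chain_def by simp
      moreover have "y \<in> prefix_chain G ys - prefix_chain G xs"
        using y by blast
      moreover have "prefix_chain G zs - prefix_chain G xs =
          (prefix_chain G ys - prefix_chain G xs) - {y}"
        unfolding chain_zs by blast
      ultimately show "card (prefix_chain G zs - prefix_chain G xs) <
          card (prefix_chain G ys - prefix_chain G xs)"
        by (metis card_Diff1_less)
    qed
    with step show ?thesis
      by (rule converse_rtrancl_into_rtrancl)
  qed
qed

end

theorem proposition3p4:
  fixes G (structure) and X :: "'a set" and g :: 'a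
  assumes "group G"
    and "X \<subseteq> carrier G"
    and "generate G X = carrier G"
    and "\<forall>x\<in>X. \<forall>h\<in>carrier G. h \<otimes> x \<otimes> inv h \<in> X"
    and "g \<in> Mon G X"
  shows "\<exists>f. bij_betw f (linfact G X g) (nonempty_chains G X g) \<and>
           (\<forall>xs\<in>linfact G X g. \<forall>ys\<in>linfact G X g.
              fact_le G X g xs ys \<longleftrightarrow> f xs \<subseteq> f ys)"
proof -
  interpret group G
    by (rule assms(1))
  interpret word_length_group G X
    by unfold_locales (rule assms(2))
  have "bij_betw (prefix_chain G) (linfact G X g) (nonempty_chains G X g)"
    unfolding bij_betw_def
    using inj_on_prefix_chain prefix_chain_in_nonempty_chains prefix_chain_surj by blast
  moreover have "fact_le G X g xs ys \<longleftrightarrow> prefix_chain G xs \<subseteq> prefix_chain G ys"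
    if "xs \<in> linfact G X g" "ys \<in> linfact G X g" for xs ys
    using that prefix_chain_subset_if_merge_steps merge_steps_if_prefix_chain_subset
    unfolding fact_le_def by blast
  ultimately show ?thesis
    by blast
qed

end
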